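(* Let $X=\{x_1,\dots,x_n\}$ be a finite biquandle and $K$ a virtual knotoid diagram. For all $i,j\in\{1,\dots,n\}$, the number $\Phi_{X_{ij}}^{\mathbb{Z}}(K)$ of $X_{ij}$-colorings of $K$ is an invariant of virtual knotoids: if $K'$ is related to $K$ by a finite sequence of extended Reidemeister moves and isotopies of $S^2$, then $\Phi_{X_{ij}}^{\mathbb{Z}}(K)=\Phi_{X_{ij}}^{\mathbb{Z}}(K')$.
   Context: A virtual knotoid diagram is an immersed oriented open curve in $S^2$ (oriented from its endpoint called the tail to its endpoint called the head) with finitely many transversal double points, each of which is either a classical crossing (with over/under information) or a virtual crossing. Extended Reidemeister moves are the classical Reidemeister moves I, II, III, the virtual Reidemeister moves I, II, III (all crossings virtual) and the mixed (detour) move, all performed away from the endpoints (moving a strand adjacent to an endpoint over or under another strand is forbidden). A virtual knotoid is an equivalence class of diagrams under these moves and isotopy of $S^2$. A biquandle is a set $X$ with binary operations $\underline{\triangleright},\overline{\triangleright}$ such that for all $x,y,z$: $x\underline{\triangleright}x=x\overline{\triangleright}x$; the maps $x\mapsto x\overline{\triangleright}y$, $x\mapsto x\underline{\triangleright}y$ and $(x,y)\mapsto(y\overline{\triangleright}x,\,x\underline{\triangleright}y)$ are invertible; and $(x\underline{\triangleright}y)\underline{\triangleright}(z\underline{\triangleright}y)=(x\underline{\triangleright}z)\underline{\triangleright}(y\overline{\triangleright}z)$, $(x\underline{\triangleright}y)\overline{\triangleright}(z\underline{\triangleright}y)=(x\overline{\triangleright}z)\underline{\triangleright}(y\overline{\triangleright}z)$,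 $(x\overline{\triangleright}y)\overline{\triangleright}(z\overline{\triangleright}y)=(x\overline{\triangleright}z)\overline{\triangleright}(y\underline{\triangleright}z)$. Semi-arcs are the pieces into which crossings cut the curve; the tail (head) semi-arc is the one containing the tail (head). An $X$-coloring of $K$ assigns an element of $X$ to each semi-arc such that at each classical crossing, drawn with both strands oriented upward, incoming lower-left and lower-right colors $x,y$ give outgoing upper-left and upper-right colors $y\overline{\triangleright}x$ and $x\underline{\triangleright}y$, and at each virtual crossing colors pass through unchanged. An $X_{ij}$-coloring is an $X$-coloring in which the tail semi-arc is colored $x_i$ and the head semi-arc is colored $x_j$; $\Phi_{X_{ij}}^{\mathbb{Z}}(K)$ denotes their number.
   Formalization: At each classical crossing, both strands upward, the left colours x (under strand) and y (over strand) give right colours $x\underline{\triangleright}y$ and $y\overline{\triangleright}x$ respectively, in place of the lower-to-upper rule. The paper assumes this as well. *)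

theory Defs
  imports Main
begin

definition biquandle :: "'a set \<Rightarrow> ('a \<Rightarrow> 'a \<Rightarrow> 'a) \<Rightarrow> ('a \<Rightarrow> 'a \<Rightarrow> 'a) \<Rightarrow> bool" where
  "biquandle X ul ol \<longleftrightarrow>
     (\<forall>x\<in>X. \<forall>y\<in>X. ul x y \<in> X \<and> ol x y \<in> X) \<and>
     (\<forall>x\<in>X. ul x x = ol x x) \<and>
     (\<forall>y\<in>X. bij_betw (\<lambda>x. ol x y) X X) \<and>
     (\<forall>y\<in>X. bij_betw (\<lambda>x. ul x y) X X) \<and>
     bij_betw (\<lambda>(x, y). (ol y x, ul x y)) (X \<times> X) (X \<times> X) \<and>
     (\<forall>x\<in>X. \<forall>y\<in>X. \<forall>z\<in>X.
        ul (ul x y) (ul z y) = ul (ul x z) (ol y z) \<and>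
        ol (ul x y) (ul z y) = ul (ol x z) (ol y z) \<and>
        ol (ol x y) (ol z y) = ol (ol x z) (ul y z))"

text \<open>A letter (l, ov, pos) records a passage of the curve through the classical
  crossing labelled l; ov = True iff the passage is the over-passage; pos = True iff
  the crossing is positive. Virtual crossings are not recorded (colours pass
  through them unchanged). A diagram with m letters has semi-arcs 0..m; semi-arc 0
  is the tail semi-arc, semi-arc m the head semi-arc, and letter k lies between
  semi-arcs k and k+1.\<close>

type_synonym letter = "nat \<times> bool \<times> bool"

definition labels :: "letter list \<Rightarrow> nat set" where
  "labels w = fst ` set w"

definition gauss_diagram :: "letter list \<Rightarrow> bool" where
  "gauss_diagram w \<longleftrightarrow>
     (\<forall>l\<in>labels w. \<exists>p q s. p < length w \<and> q < length w \<and>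
        w ! p = (l, True, s) \<and> w ! q = (l, False, s) \<and>
        (\<forall>i<length w. fst (w ! i) = l \<longrightarrow> i = p \<or> i = q))"

text \<open>Colouring rule at a classical crossing (drawn with both strands upward):
  if uL, uR (oL, oR) are the colours of the under (over) strand on the left and
  right side of the crossing, then uR = uL ul oL and oR = oL ol uL.
  At a positive crossing the over strand runs from the left to the right side and
  the under strand from the right to the left side; at a negative crossing the
  other way round.\<close>

definition crossing_ok ::
  "('a \<Rightarrow> 'a \<Rightarrow> 'a) \<Rightarrow> ('a \<Rightarrow> 'a \<Rightarrow> 'a) \<Rightarrow> bool \<Rightarrow> 'a \<Rightarrow> 'a \<Rightarrow> 'a \<Rightarrow> 'a \<Rightarrow> bool" where
  "crossing_ok ul ol pos o_in o_out u_in u_out \<longleftrightarrow>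
     (if pos then u_in = ul u_out o_in \<and> o_out = ol o_in u_out
      else u_out = ul u_in o_out \<and> o_in = ol o_out u_in)"

definition is_coloring ::
  "'a set \<Rightarrow> ('a \<Rightarrow> 'a \<Rightarrow> 'a) \<Rightarrow> ('a \<Rightarrow> 'a \<Rightarrow> 'a) \<Rightarrow> letter list \<Rightarrow> 'a list \<Rightarrow> bool" where
  "is_coloring X ul ol w cs \<longleftrightarrow>
     length cs = Suc (length w) \<and> set cs \<subseteq> X \<and>
     (\<forall>p<length w. \<forall>q<length w. \<forall>l s.
        w ! p = (l, True, s) \<and> w ! q = (l, False, s) \<longrightarrow>
        crossing_ok ul ol s (cs ! p) (cs ! Suc p) (cs ! q) (cs ! Suc q))"

definition Phi ::
  "'a set \<Rightarrow> ('a \<Rightarrow> 'a \<Rightarrow> 'a) \<Rightarrow> ('a \<Rightarrow> 'a \<Rightarrow> 'a) \<Rightarrow> 'a \<Rightarrow> 'a \<Rightarrow> letter list \<Rightarrow> nat" where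
  "Phi X ul ol xi xj w =
     card {cs. is_coloring X ul ol w cs \<and> cs ! 0 = xi \<and> cs ! length w = xj}"

text \<open>Virtual Reidemeister moves, detour moves and isotopies of S^2 do not change
  the Gauss code (up to renaming labels). The classical moves (away from the
  endpoints) act as follows.\<close>

definition r1_move :: "letter list \<Rightarrow> letter list \<Rightarrow> bool" where
  "r1_move w w' \<longleftrightarrow>
     (\<exists>u v l ov s. w = u @ [(l, ov, s), (l, \<not> ov, s)] @ v \<and> w' = u @ v \<and>
        l \<notin> labels (u @ v))"

definition r2_move :: "letter list \<Rightarrow> letter list \<Rightarrow> bool" where
  "r2_move w w' \<longleftrightarrow>
     (\<exists>u1 u2 u3 a b s rev ovfirst.
        a \<noteq> b \<and> a \<notin> labels (u1 @ u2 @ u3) \<and> b \<notin> labels (u1 @ u2 @ u3) \<and>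
        (let OP = [(a, True, s), (b, True, \<not> s)];
             UP = (if rev then [(b, False, \<not> s), (a, False, s)]
                   else [(a, False, s), (b, False, \<not> s)])
         in w = u1 @ (if ovfirst then OP else UP) @ u2 @ (if ovfirst then UP else OP) @ u3) \<and>
        w' = u1 @ u2 @ u3)"

text \<open>Third move: three strands T (top), M (middle), B (bottom); crossing a is
  T over M, b is T over B, c is M over B. The flags oT, oM, oB give the order in
  which each strand meets its two crossings; the move reverses all three orders.
  The sign/order condition is exactly the one realised by three oriented
  strands bounding a small triangle in the plane.\<close>

definition r3_pieces ::
  "nat \<Rightarrow> nat \<Rightarrow> nat \<Rightarrow> bool \<Rightarrow> bool \<Rightarrow> bool \<Rightarrow> bool \<Rightarrow> bool \<Rightarrow> bool \<Rightarrow> letter list list" where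
  "r3_pieces a b c sa sb sc oT oM oB =
     [ (if oT then [(a, True, sa), (b, True, sb)] else [(b, True, sb), (a, True, sa)]),
       (if oM then [(a, False, sa), (c, True, sc)] else [(c, True, sc), (a, False, sa)]),
       (if oB then [(b, False, sb), (c, False, sc)] else [(c, False, sc), (b, False, sb)]) ]"

definition r3_move :: "letter list \<Rightarrow> letter list \<Rightarrow> bool" where
  "r3_move w w' \<longleftrightarrow>
     (\<exists>u0 u1 u2 u3 a b c sa sb sc oT oM oB i j k.
        distinct [a, b, c] \<and> {a, b, c} \<inter> labels (u0 @ u1 @ u2 @ u3) = {} \<and>
        ((oM = oT) \<longleftrightarrow> (sb = sc)) \<and> ((oB = oT) \<longleftrightarrow> (sa = sc)) \<and>
        distinct [i, j, k] \<and> i < 3 \<and> j < 3 \<and> k < 3 \<and>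
        (let P = r3_pieces a b c sa sb sc oT oM oB;
             Q = r3_pieces a b c sa sb sc (\<not> oT) (\<not> oM) (\<not> oB)
         in w = u0 @ P ! i @ u1 @ P ! j @ u2 @ P ! k @ u3 \<and>
            w' = u0 @ Q ! i @ u1 @ Q ! j @ u2 @ Q ! k @ u3))"

definition relabel_move :: "letter list \<Rightarrow> letter list \<Rightarrow> bool" where
  "relabel_move w w' \<longleftrightarrow>
     (\<exists>f. inj_on f (labels w) \<and> w' = map (\<lambda>(l, ov, s). (f l, ov, s)) w)"

definition knotoid_step :: "letter list \<Rightarrow> letter list \<Rightarrow> bool" where
  "knotoid_step w w' \<longleftrightarrow> gauss_diagram w \<and> gauss_diagram w' \<and>
     (r1_move w w' \<or> r1_move w' w \<or> r2_move w w' \<or> r2_move w' w \<or>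
      r3_move w w' \<or> r3_move w' w \<or> relabel_move w w' \<or> relabel_move w' w)"

definition knotoid_equiv :: "letter list \<Rightarrow> letter list \<Rightarrow> bool" where
  "knotoid_equiv = knotoid_step\<^sup>*\<^sup>*"

end

theory Submission
  imports Defs
begin

text \<open>
  Counting colourings is local. Cutting a Gauss code at the pieces touched by a classical
  move, a colouring is an outer colouring together with colourings of the pieces that enter
  and leave them with prescribed colours. So it suffices that the old and the new pieces admit
  equally many such colourings, for all boundary colours.

  For the first and second moves there is exactly one colouring if every strand leaves with
  its entry colour and none otherwise: one colour on each strand determines a crossing, and on
  a finite biquandle the diagonal map \<open>x \<mapsto> ol x x\<close> is a bijection. For the third move
  the colours between the crossings determine the boundary colours and vice versa, and every
  triple of inner colours occurs, so for either orientation the colourings form the graph of a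
  partial function with \<open>card X ^ 3\<close> elements. For one of the two orientations the exchange
  laws turn colourings of the old pieces into colourings of the new ones; equal cardinality then
  forces the two domains to coincide.
\<close>

lemma card_subsingleton:
  assumes "\<And>x y. x \<in> S \<Longrightarrow> y \<in> S \<Longrightarrow> x = y" and "S \<noteq> {} \<longleftrightarrow> P"
  shows "card S = (if P then 1 else 0)"
proof (cases "S = {}")
  case False
  then obtain x where "x \<in> S"
    by blast
  with assms(1) have "S = {x}"
    by blast
  with assms(2) show ?thesis
    by simp
qed (use assms(2) in simp)

lemma card_Domain_single_valued: "single_valued R \<Longrightarrow> card (Domain R) = card R"
  unfolding Domain_fst single_valued_def by (rule card_image) (force simp: inj_on_def)

lemma card_Image_single_valued:
  "single_valued R \<Longrightarrow> card (R `` {b}) = (if b \<in> Domain R then 1 else 0)"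
  by (rule card_subsingleton) (auto simp: single_valued_def)

lemma card_Image_eq_if_single_valued:
  assumes "finite S" and "card R = card S" and "single_valued R" "single_valued S"
    and "Domain R \<subseteq> Domain S"
  shows "card (R `` {b}) = card (S `` {b})"
proof -
  have "Domain R = Domain S"
    using assms card_Domain_single_valued[OF assms(3)] card_Domain_single_valued[OF assms(4)]
    by (intro card_subset_eq) (simp_all add: finite_Domain)
  then show ?thesis
    using assms(3,4) by (simp add: card_Image_single_valued)
qed

lemma last_Cons_append: "last (c # xs @ ys) = last (last (c # xs) # ys)"
  by (induction xs arbitrary: c) auto

lemma last_Cons_in: "c \<in> A \<Longrightarrow> set xs \<subseteq> A \<Longrightarrow> last (c # xs) \<in> A"
  by (induction xs arbitrary: c) auto

section \<open>Biquandles and the crossing rule\<close>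

locale biquandle_on =
  fixes X :: "'a set" and ul ol :: "'a \<Rightarrow> 'a \<Rightarrow> 'a"
  assumes biquandle: "biquandle X ul ol"
begin

lemma ul_closed [simp, intro]: "x \<in> X \<Longrightarrow> y \<in> X \<Longrightarrow> ul x y \<in> X"
  and ol_closed [simp, intro]: "x \<in> X \<Longrightarrow> y \<in> X \<Longrightarrow> ol x y \<in> X"
  and ul_ol_idem: "x \<in> X \<Longrightarrow> ul x x = ol x x"
  and bij_ol: "y \<in> X \<Longrightarrow> bij_betw (\<lambda>x. ol x y) X X"
  and bij_ul: "y \<in> X \<Longrightarrow> bij_betw (\<lambda>x. ul x y) X X"
  and bij_switch: "bij_betw (\<lambda>(x, y). (ol y x, ul x y)) (X \<times> X) (X \<times> X)"
  using biquandle unfolding biquandle_def by auto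

lemma exchange_laws:
  "\<lbrakk>x \<in> X; y \<in> X; z \<in> X\<rbrakk> \<Longrightarrow> ul (ul x y) (ul z y) = ul (ul x z) (ol y z)"
  "\<lbrakk>x \<in> X; y \<in> X; z \<in> X\<rbrakk> \<Longrightarrow> ol (ul x y) (ul z y) = ul (ol x z) (ol y z)"
  "\<lbrakk>x \<in> X; y \<in> X; z \<in> X\<rbrakk> \<Longrightarrow> ol (ol x y) (ol z y) = ol (ol x z) (ul y z)"
  using biquandle unfolding biquandle_def by blast+

lemma ul_left_cancel: "\<lbrakk>x \<in> X; x' \<in> X; y \<in> X; ul x y = ul x' y\<rbrakk> \<Longrightarrow> x = x'"
  using bij_ul unfolding bij_betw_def inj_on_def by blast

lemma ol_left_cancel: "\<lbrakk>x \<in> X; x' \<in> X; y \<in> X; ol x y = ol x' y\<rbrakk> \<Longrightarrow> x = x'"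
  using bij_ol unfolding bij_betw_def inj_on_def by blast

lemma switch_cancel:
  "\<lbrakk>x \<in> X; y \<in> X; x' \<in> X; y' \<in> X; ol y x = ol y' x'; ul x y = ul x' y'\<rbrakk> \<Longrightarrow> x = x' \<and> y = y'"
  using inj_onD[OF bij_betw_imp_inj_on[OF bij_switch], of "(x, y)" "(x', y')"] by simp

lemma ul_left_solvable: "\<lbrakk>y \<in> X; z \<in> X\<rbrakk> \<Longrightarrow> \<exists>x\<in>X. ul x y = z"
  using bij_ul unfolding bij_betw_def by (metis image_iff)

lemma ol_left_solvable: "\<lbrakk>y \<in> X; z \<in> X\<rbrakk> \<Longrightarrow> \<exists>x\<in>X. ol x y = z"
  using bij_ol unfolding bij_betw_def by (metis image_iff)

lemma switch_solvable:
  assumes "a \<in> X" "b \<in> X"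
  shows "\<exists>x\<in>X. \<exists>y\<in>X. ol y x = a \<and> ul x y = b"
proof -
  have "(a, b) \<in> (\<lambda>(x, y). (ol y x, ul x y)) ` (X \<times> X)"
    using bij_switch assms by (simp add: bij_betw_def)
  then show ?thesis by auto
qed

lemma crossing_ok_reverse:
  "crossing_ok ul ol (\<not> s) o_out o_in u_out u_in \<longleftrightarrow> crossing_ok ul ol s o_in o_out u_in u_out"
  unfolding crossing_ok_def by auto

lemma crossing_ok_determined:
  assumes "crossing_ok ul ol s oi oo ui uo" "crossing_ok ul ol s oi' oo' ui' uo'"
    and "oi \<in> X" "oo \<in> X" "ui \<in> X" "uo \<in> X" "oi' \<in> X" "oo' \<in> X" "ui' \<in> X" "uo' \<in> X"
    and "oi = oi' \<or> oo = oo'" and "ui = ui' \<or> uo = uo'"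
  shows "oi = oi' \<and> oo = oo' \<and> ui = ui' \<and> uo = uo'"
proof -
  have positive: "oi = oi' \<and> oo = oo' \<and> ui = ui' \<and> uo = uo'"
    if "crossing_ok ul ol True oi oo ui uo" "crossing_ok ul ol True oi' oo' ui' uo'"
      "oi \<in> X" "uo \<in> X" "oi' \<in> X" "uo' \<in> X" "oi = oi' \<or> oo = oo'" "ui = ui' \<or> uo = uo'"
    for oi oo ui uo oi' oo' ui' uo'
    using that ul_left_cancel[of uo uo' oi] ol_left_cancel[of oi oi' uo] switch_cancel[of uo oi uo' oi']
    unfolding crossing_ok_def by auto
  show ?thesis
  proof (cases s)
    case True
    then have "crossing_ok ul ol True oi oo ui uo" "crossing_ok ul ol True oi' oo' ui' uo'"
      using assms(1,2) by simp_all
    from positive[OF this] assms show ?thesis by blast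
  next
    case False
    then have "crossing_ok ul ol True oo oi uo ui" "crossing_ok ul ol True oo' oi' uo' ui'"
      using assms(1,2) crossing_ok_reverse[of True] by simp_all
    from positive[OF this] assms show ?thesis by blast
  qed
qed

text \<open>The given over colour \<open>x\<close> is the outgoing one iff \<open>po\<close>, the given under colour
  \<open>y\<close> the outgoing one iff \<open>pu\<close>.\<close>

lemma crossing_ok_extend:
  assumes "x \<in> X" "y \<in> X"
  shows "\<exists>x'\<in>X. \<exists>y'\<in>X. crossing_ok ul ol s
    (if po then x' else x) (if po then x else x') (if pu then y' else y) (if pu then y else y')"
proof -
  have positive: "\<exists>x'\<in>X. \<exists>y'\<in>X. crossing_ok ul ol True
      (if po then x' else x) (if po then x else x') (if pu then y' else y) (if pu then y else y')"
    for po pu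
  proof (cases po; cases pu)
    assume "\<not> po" "\<not> pu"
    obtain y' where "y' \<in> X" "ul y' x = y"
      using ul_left_solvable assms by blast
    with \<open>\<not> po\<close> \<open>\<not> pu\<close> assms show ?thesis
      unfolding crossing_ok_def by auto
  next
    assume "\<not> po" "pu"
    with assms show ?thesis
      unfolding crossing_ok_def by auto
  next
    assume "po" "\<not> pu"
    obtain y' x' where "y' \<in> X" "x' \<in> X" "ol x' y' = x" "ul y' x' = y"
      using switch_solvable[OF assms] by blast
    with \<open>po\<close> \<open>\<not> pu\<close> show ?thesis
      unfolding crossing_ok_def by auto
  next
    assume "po" "pu"
    obtain x' where "x' \<in> X" "ol x' y = x"
      using ol_left_solvable assms by blast
    with \<open>po\<close> \<open>pu\<close> assms show ?thesis
      unfolding crossing_ok_def by auto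
  qed
  show ?thesis
  proof (cases s)
    case False
    then show ?thesis
      using positive[of "\<not> po" "\<not> pu"] crossing_ok_reverse[of True] by (cases po; cases pu) auto
  qed (use positive in simp)
qed

text \<open>A curve entering with colour \<open>i\<close> passes a crossing twice, first as the over strand iff
  \<open>ov\<close>, and leaves with colour \<open>e\<close>; \<open>x\<close> is the colour of the loop.\<close>

definition kink_coloured :: "bool \<Rightarrow> bool \<Rightarrow> 'a \<Rightarrow> 'a \<Rightarrow> 'a \<Rightarrow> bool" where
  "kink_coloured ov s i x e \<longleftrightarrow>
    (if ov then crossing_ok ul ol s i x x e else crossing_ok ul ol s x e i x)"

lemma kink_coloured_unique:
  assumes "kink_coloured ov s i x e" "kink_coloured ov s i x' e" "i \<in> X" "e \<in> X" "x \<in> X" "x' \<in> X"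
  shows "x = x'"
proof (cases ov)
  case True
  with assms(1,2) have "crossing_ok ul ol s i x x e" "crossing_ok ul ol s i x' x' e"
    unfolding kink_coloured_def by simp_all
  from crossing_ok_determined[OF this] assms(3-) show ?thesis
    by simp
next
  case False
  with assms(1,2) have "crossing_ok ul ol s x e i x" "crossing_ok ul ol s x' e i x'"
    unfolding kink_coloured_def by simp_all
  from crossing_ok_determined[OF this] assms(3-) show ?thesis
    by simp
qed

text \<open>An upper strand \<open>i0 \<rightarrow> x \<rightarrow> e0\<close> and a lower strand \<open>i1 \<rightarrow> y \<rightarrow> e1\<close> cross twice with
  opposite signs, the lower one in reversed order iff \<open>rv\<close>; by \<open>crossing_ok_reverse\<close> the
  second crossing is stated with sign \<open>s\<close> as well.\<close>

definition bigon_coloured :: "bool \<Rightarrow> bool \<Rightarrow> 'a \<Rightarrow> 'a \<Rightarrow> 'a \<Rightarrow> 'a \<Rightarrow> 'a \<Rightarrow> 'a \<Rightarrow> bool" where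
  "bigon_coloured rv s i0 x e0 i1 y e1 \<longleftrightarrow>
    (if rv then crossing_ok ul ol s i0 x y e1 \<and> crossing_ok ul ol s e0 x y i1
     else crossing_ok ul ol s i0 x i1 y \<and> crossing_ok ul ol s e0 x e1 y)"

lemma bigon_coloured_unique:
  assumes "bigon_coloured rv s i0 x e0 i1 y e1" "bigon_coloured rv s i0 x' e0 i1 y' e1"
    and "i0 \<in> X" "i1 \<in> X" "e1 \<in> X" "x \<in> X" "y \<in> X" "x' \<in> X" "y' \<in> X"
  shows "x = x' \<and> y = y'"
proof (cases rv)
  case True
  with assms(1,2) have "crossing_ok ul ol s i0 x y e1" "crossing_ok ul ol s i0 x' y' e1"
    unfolding bigon_coloured_def by simp_all
  from crossing_ok_determined[OF this] assms(3-) show ?thesis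
    by simp
next
  case False
  with assms(1,2) have "crossing_ok ul ol s i0 x i1 y" "crossing_ok ul ol s i0 x' i1 y'"
    unfolding bigon_coloured_def by simp_all
  from crossing_ok_determined[OF this] assms(3-) show ?thesis
    by simp
qed

lemma bigon_coloured_exists_iff:
  assumes "i0 \<in> X" "i1 \<in> X" "e0 \<in> X" "e1 \<in> X"
  shows "(\<exists>x\<in>X. \<exists>y\<in>X. bigon_coloured rv s i0 x e0 i1 y e1) \<longleftrightarrow> i0 = e0 \<and> i1 = e1"
proof
  assume "\<exists>x\<in>X. \<exists>y\<in>X. bigon_coloured rv s i0 x e0 i1 y e1"
  then obtain x y where xy: "x \<in> X" "y \<in> X" "bigon_coloured rv s i0 x e0 i1 y e1"
    by blast
  show "i0 = e0 \<and> i1 = e1"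
  proof (cases rv)
    case True
    with xy have "crossing_ok ul ol s i0 x y e1" "crossing_ok ul ol s e0 x y i1"
      unfolding bigon_coloured_def by simp_all
    from crossing_ok_determined[OF this] xy assms show ?thesis
      by simp
  next
    case False
    with xy have "crossing_ok ul ol s i0 x i1 y" "crossing_ok ul ol s e0 x e1 y"
      unfolding bigon_coloured_def by simp_all
    from crossing_ok_determined[OF this] xy assms show ?thesis
      by simp
  qed
next
  assume "i0 = e0 \<and> i1 = e1"
  moreover obtain x y where "x \<in> X" "y \<in> X"
    "if rv then crossing_ok ul ol s i0 x y i1 else crossing_ok ul ol s i0 x i1 y"
    using crossing_ok_extend[OF assms(1,2), of s False rv] by (cases rv) auto
  ultimately show "\<exists>x\<in>X. \<exists>y\<in>X. bigon_coloured rv s i0 x e0 i1 y e1"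
    unfolding bigon_coloured_def by (cases rv) auto
qed

end

section \<open>Colourings of Gauss codes\<close>

text \<open>\<open>decorate w c os\<close> attaches to the \<open>k\<close>-th letter of \<open>w\<close> the colours of the semi-arcs
  \<open>k\<close> and \<open>k + 1\<close> of the colouring \<open>c # os\<close>.\<close>

fun decorate :: "letter list \<Rightarrow> 'a \<Rightarrow> 'a list \<Rightarrow> (letter \<times> 'a \<times> 'a) list" where
  "decorate (x # xs) c (d # ds) = (x, c, d) # decorate xs d ds"
| "decorate _ _ _ = []"

lemma in_set_decorate:
  "length os = length w \<Longrightarrow>
    z \<in> set (decorate w c os) \<longleftrightarrow> (\<exists>k<length w. z = (w ! k, (c # os) ! k, os ! k))"
proof (induction w arbitrary: c os)
  case (Cons x xs)
  then obtain d ds where "os = d # ds" "length ds = length xs"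
    by (cases os) auto
  with Cons.IH[of ds d] show ?case
    by (auto simp: less_Suc_eq_0_disj)
qed simp

lemma decorate_append:
  "length os = length w \<Longrightarrow> decorate (w @ v) c (os @ ps) = decorate w c os @ decorate v (last (c # os)) ps"
proof (induction w arbitrary: c os)
  case (Cons x xs)
  then show ?case
    by (cases os) auto
qed simp

lemma letters_decorate: "fst ` set (decorate w c os) \<subseteq> set w"
  by (induction w c os rule: decorate.induct) auto

definition crossings_ok ::
  "('a \<Rightarrow> 'a \<Rightarrow> 'a) \<Rightarrow> ('a \<Rightarrow> 'a \<Rightarrow> 'a) \<Rightarrow> (letter \<times> 'a \<times> 'a) set \<Rightarrow> bool" where
  "crossings_ok ul ol S \<longleftrightarrow>
     (\<forall>l s a b c d. ((l, True, s), a, b) \<in> S \<longrightarrow> ((l, False, s), c, d) \<in> S \<longrightarrow>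
        crossing_ok ul ol s a b c d)"

lemma crossings_ok_empty [simp]: "crossings_ok ul ol {}"
  unfolding crossings_ok_def by simp

lemma crossings_ok_insert_over:
  "crossings_ok ul ol (insert ((l, True, s), a, b) S) \<longleftrightarrow>
     crossings_ok ul ol S \<and> (\<forall>c d. ((l, False, s), c, d) \<in> S \<longrightarrow> crossing_ok ul ol s a b c d)"
  unfolding crossings_ok_def by auto

lemma crossings_ok_insert_under:
  "crossings_ok ul ol (insert ((l, False, s), c, d) S) \<longleftrightarrow>
     crossings_ok ul ol S \<and> (\<forall>a b. ((l, True, s), a, b) \<in> S \<longrightarrow> crossing_ok ul ol s a b c d)"
  unfolding crossings_ok_def by auto

lemma crossings_ok_Un:
  assumes "\<And>z z'. z \<in> S \<Longrightarrow> z' \<in> T \<Longrightarrow> fst (fst z) \<noteq> fst (fst z')"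
  shows "crossings_ok ul ol (S \<union> T) \<longleftrightarrow> crossings_ok ul ol S \<and> crossings_ok ul ol T"
  using assms unfolding crossings_ok_def by (auto; fastforce)

locale colour_counting =
  fixes X :: "'a set" and ul ol :: "'a \<Rightarrow> 'a \<Rightarrow> 'a"
  assumes finite_X: "finite X"
begin

text \<open>A colouring with tail colour \<open>xi\<close> is represented by the list \<open>os\<close> of the colours of the
  other semi-arcs; its head colour is \<open>last (xi # os)\<close>.\<close>

definition colourings :: "'a \<Rightarrow> 'a \<Rightarrow> letter list \<Rightarrow> 'a list set" where
  "colourings xi xj w = {os. length os = length w \<and> set os \<subseteq> X \<and>
     crossings_ok ul ol (set (decorate w xi os)) \<and> last (xi # os) = xj}"

lemma is_coloring_Cons_iff:
  assumes "length os = length w"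
  shows "is_coloring X ul ol w (c # os) \<longleftrightarrow>
    c \<in> X \<and> set os \<subseteq> X \<and> crossings_ok ul ol (set (decorate w c os))"
proof -
  have "crossings_ok ul ol (set (decorate w c os)) \<longleftrightarrow>
     (\<forall>p<length w. \<forall>q<length w. \<forall>l s. w ! p = (l, True, s) \<and> w ! q = (l, False, s) \<longrightarrow>
        crossing_ok ul ol s ((c # os) ! p) ((c # os) ! Suc p) ((c # os) ! q) ((c # os) ! Suc q))"
    unfolding crossings_ok_def in_set_decorate[OF assms] by (auto; metis)
  then show ?thesis
    unfolding is_coloring_def using assms by auto
qed

lemma Phi_eq_card_colourings:
  assumes "xi \<in> X"
  shows "Phi X ul ol xi xj w = card (colourings xi xj w)"
proof -
  have last_nth: "(c # os) ! length os = last (c # os)" for c :: 'a and os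
    by (simp add: last_conv_nth)
  have "{cs. is_coloring X ul ol w cs \<and> cs ! 0 = xi \<and> cs ! length w = xj} = Cons xi ` colourings xi xj w"
  proof (intro set_eqI iffI)
    fix cs
    assume cs: "cs \<in> {cs. is_coloring X ul ol w cs \<and> cs ! 0 = xi \<and> cs ! length w = xj}"
    then obtain os where os: "cs = xi # os" "length os = length w"
      unfolding is_coloring_def by (cases cs) auto
    with cs have "os \<in> colourings xi xj w"
      unfolding colourings_def using last_nth[of xi os] by (simp add: is_coloring_Cons_iff)
    with os show "cs \<in> Cons xi ` colourings xi xj w"
      by blast
  next
    fix cs
    assume "cs \<in> Cons xi ` colourings xi xj w"
    then obtain os where "cs = xi # os" "os \<in> colourings xi xj w"
      by blast
    with assms show "cs \<in> {cs. is_coloring X ul ol w cs \<and> cs ! 0 = xi \<and> cs ! length w = xj}"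
      unfolding colourings_def using last_nth[of xi os] by (simp add: is_coloring_Cons_iff)
  qed
  then show ?thesis
    unfolding Phi_def by (simp add: card_image)
qed

text \<open>The code \<open>u0 @ A0 @ u1 @ A1 @ u2 @ A2 @ u3\<close> is cut into outer segments \<open>u\<^sub>k\<close> and pieces
  \<open>A\<^sub>k\<close>. A filling colours the pieces, entered with colours \<open>i\<^sub>k\<close> and left with \<open>e\<^sub>k\<close>; an outer
  colouring colours the segments and records the \<open>e\<^sub>k\<close>, which colour the first semi-arc of
  \<open>u\<^bsub>k+1\<^esub>\<close>, while the \<open>i\<^sub>k\<close> are the last colours of the \<open>u\<^sub>k\<close>.\<close>

definition strand_colours :: "letter list \<Rightarrow> 'a \<Rightarrow> 'a \<Rightarrow> 'a list \<Rightarrow> bool" where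
  "strand_colours A i e ps \<longleftrightarrow> length ps = length A \<and> set ps \<subseteq> X \<and> last (i # ps) = e"

lemma strand_colours_Nil [simp]: "strand_colours [] i e ps \<longleftrightarrow> ps = [] \<and> i = e"
  unfolding strand_colours_def by auto

lemma strand_colours_length_2:
  assumes "length A = 2" "e \<in> X"
  shows "strand_colours A i e ps \<longleftrightarrow> (\<exists>x\<in>X. ps = [x, e])"
  using assms unfolding strand_colours_def by (auto simp: numeral_2_eq_2 length_Suc_conv)

definition fillings :: "letter list \<Rightarrow> letter list \<Rightarrow> letter list \<Rightarrow>
    'a \<Rightarrow> 'a \<Rightarrow> 'a \<Rightarrow> 'a \<Rightarrow> 'a \<Rightarrow> 'a \<Rightarrow> ('a list \<times> 'a list \<times> 'a list) set" where
  "fillings A0 A1 A2 i0 i1 i2 e0 e1 e2 = {(p0, p1, p2).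
     strand_colours A0 i0 e0 p0 \<and> strand_colours A1 i1 e1 p1 \<and> strand_colours A2 i2 e2 p2 \<and>
     crossings_ok ul ol (set (decorate A0 i0 p0) \<union> set (decorate A1 i1 p1) \<union> set (decorate A2 i2 p2))}"

definition outer_colourings :: "'a \<Rightarrow> 'a \<Rightarrow> letter list \<Rightarrow> letter list \<Rightarrow> letter list \<Rightarrow> letter list \<Rightarrow>
    ('a list \<times> 'a list \<times> 'a list \<times> 'a list \<times> 'a \<times> 'a \<times> 'a) set" where
  "outer_colourings xi xj u0 u1 u2 u3 = {(o0, o1, o2, o3, e0, e1, e2).
     length o0 = length u0 \<and> length o1 = length u1 \<and> length o2 = length u2 \<and> length o3 = length u3 \<and>
     set o0 \<subseteq> X \<and> set o1 \<subseteq> X \<and> set o2 \<subseteq> X \<and> set o3 \<subseteq> X \<and> e0 \<in> X \<and> e1 \<in> X \<and> e2 \<in> X \<and>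
     crossings_ok ul ol (set (decorate u0 xi o0) \<union> set (decorate u1 e0 o1) \<union>
       set (decorate u2 e1 o2) \<union> set (decorate u3 e2 o3)) \<and>
     last (e2 # o3) = xj}"

fun inner_fillings :: "'a \<Rightarrow> letter list \<Rightarrow> letter list \<Rightarrow> letter list \<Rightarrow>
    'a list \<times> 'a list \<times> 'a list \<times> 'a list \<times> 'a \<times> 'a \<times> 'a \<Rightarrow> ('a list \<times> 'a list \<times> 'a list) set" where
  "inner_fillings xi A0 A1 A2 (o0, o1, o2, o3, e0, e1, e2) =
     fillings A0 A1 A2 (last (xi # o0)) (last (e0 # o1)) (last (e1 # o2)) e0 e1 e2"

fun splice ::
  "('a list \<times> 'a list \<times> 'a list \<times> 'a list \<times> 'a \<times> 'a \<times> 'a) \<times> ('a list \<times> 'a list \<times> 'a list) \<Rightarrow> 'a list"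
where
  "splice ((o0, o1, o2, o3, e0, e1, e2), (p0, p1, p2)) = o0 @ p0 @ o1 @ p1 @ o2 @ p2 @ o3"

lemma splice_in_colourings_iff:
  assumes lengths: "length o0 = length u0" "length p0 = length A0" "length o1 = length u1"
      "length p1 = length A1" "length o2 = length u2" "length p2 = length A2"
    and lasts: "last (xi # o0) = i0" "last (i0 # p0) = e0" "last (e0 # o1) = i1"
      "last (i1 # p1) = e1" "last (e1 # o2) = i2" "last (i2 # p2) = e2"
    and disjoint: "labels (A0 @ A1 @ A2) \<inter> labels (u0 @ u1 @ u2 @ u3) = {}"
  shows "o0 @ p0 @ o1 @ p1 @ o2 @ p2 @ o3 \<in> colourings xi xj (u0 @ A0 @ u1 @ A1 @ u2 @ A2 @ u3) \<longleftrightarrow>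
    length o3 = length u3 \<and> set (o0 @ p0 @ o1 @ p1 @ o2 @ p2 @ o3) \<subseteq> X \<and>
    crossings_ok ul ol (set (decorate u0 xi o0) \<union> set (decorate u1 e0 o1) \<union>
      set (decorate u2 e1 o2) \<union> set (decorate u3 e2 o3)) \<and>
    crossings_ok ul ol (set (decorate A0 i0 p0) \<union> set (decorate A1 i1 p1) \<union> set (decorate A2 i2 p2)) \<and>
    last (e2 # o3) = xj"
proof -
  let ?outer = "set (decorate u0 xi o0) \<union> set (decorate u1 e0 o1) \<union>
      set (decorate u2 e1 o2) \<union> set (decorate u3 e2 o3)"
  let ?inner = "set (decorate A0 i0 p0) \<union> set (decorate A1 i1 p1) \<union> set (decorate A2 i2 p2)"
  have "set (decorate (u0 @ A0 @ u1 @ A1 @ u2 @ A2 @ u3) xi (o0 @ p0 @ o1 @ p1 @ o2 @ p2 @ o3)) =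
      ?outer \<union> ?inner"
    using lengths lasts by (auto simp: decorate_append)
  moreover have "crossings_ok ul ol (?outer \<union> ?inner) \<longleftrightarrow>
      crossings_ok ul ol ?outer \<and> crossings_ok ul ol ?inner"
  proof (rule crossings_ok_Un)
    fix z z'
    assume "z \<in> ?outer" "z' \<in> ?inner"
    then have "fst (fst z) \<in> labels (u0 @ u1 @ u2 @ u3)" "fst (fst z') \<in> labels (A0 @ A1 @ A2)"
      using letters_decorate unfolding labels_def by fastforce+
    with disjoint show "fst (fst z) \<noteq> fst (fst z')"
      by (metis disjoint_iff)
  qed
  moreover have "last (xi # o0 @ p0 @ o1 @ p1 @ o2 @ p2 @ o3) = last (e2 # o3)"
    by (simp only: last_Cons_append lasts)
  ultimately show ?thesis
    using lengths unfolding colourings_def by auto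
qed

lemma inj_on_splice:
  "inj_on splice (SIGMA g:outer_colourings xi xj u0 u1 u2 u3. inner_fillings xi A0 A1 A2 g)"
proof (rule inj_onI)
  fix x y
  assume x: "x \<in> (SIGMA g:outer_colourings xi xj u0 u1 u2 u3. inner_fillings xi A0 A1 A2 g)"
    and y: "y \<in> (SIGMA g:outer_colourings xi xj u0 u1 u2 u3. inner_fillings xi A0 A1 A2 g)"
    and eq: "splice x = splice y"
  obtain o0 o1 o2 o3 e0 e1 e2 p0 p1 p2 where x_eq: "x = ((o0, o1, o2, o3, e0, e1, e2), (p0, p1, p2))"
    by (cases x) auto
  obtain o0' o1' o2' o3' e0' e1' e2' p0' p1' p2' where
    y_eq: "y = ((o0', o1', o2', o3', e0', e1', e2'), (p0', p1', p2'))"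
    by (cases y) auto
  from x y have "length o0 = length o0'" "length p0 = length p0'" "length o1 = length o1'"
    "length p1 = length p1'" "length o2 = length o2'" "length p2 = length p2'"
    unfolding x_eq y_eq by (auto simp: outer_colourings_def fillings_def strand_colours_def)
  with eq have lists: "o0 = o0'" "p0 = p0'" "o1 = o1'" "p1 = p1'" "o2 = o2'" "p2 = p2'" "o3 = o3'"
    unfolding x_eq y_eq by auto
  moreover from x y have "e0 = e0'" "e1 = e1'" "e2 = e2'"
    unfolding x_eq y_eq by (auto simp: fillings_def strand_colours_def lists)
  ultimately show "x = y"
    unfolding x_eq y_eq by simp
qed

lemma splice_image:
  assumes xi: "xi \<in> X"
    and disjoint: "labels (A0 @ A1 @ A2) \<inter> labels (u0 @ u1 @ u2 @ u3) = {}"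
  shows "splice ` (SIGMA g:outer_colourings xi xj u0 u1 u2 u3. inner_fillings xi A0 A1 A2 g) =
    colourings xi xj (u0 @ A0 @ u1 @ A1 @ u2 @ A2 @ u3)"
proof (intro set_eqI iffI)
  fix os
  assume "os \<in> splice ` (SIGMA g:outer_colourings xi xj u0 u1 u2 u3. inner_fillings xi A0 A1 A2 g)"
  then obtain o0 o1 o2 o3 e0 e1 e2 p0 p1 p2 where
    outer: "(o0, o1, o2, o3, e0, e1, e2) \<in> outer_colourings xi xj u0 u1 u2 u3" and
    inner: "(p0, p1, p2) \<in> fillings A0 A1 A2 (last (xi # o0)) (last (e0 # o1)) (last (e1 # o2)) e0 e1 e2" and
    os: "os = o0 @ p0 @ o1 @ p1 @ o2 @ p2 @ o3"
    by force
  from outer inner show "os \<in> colourings xi xj (u0 @ A0 @ u1 @ A1 @ u2 @ A2 @ u3)"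
    unfolding os outer_colourings_def fillings_def strand_colours_def
    by (subst splice_in_colourings_iff[OF _ _ _ _ _ _ refl _ refl _ refl _ disjoint]) auto
next
  fix os
  assume os: "os \<in> colourings xi xj (u0 @ A0 @ u1 @ A1 @ u2 @ A2 @ u3)"
  then have "list_all2 (\<lambda>_ _. True) (u0 @ A0 @ u1 @ A1 @ u2 @ A2 @ u3) os"
    unfolding colourings_def by (simp add: list_all2_conv_all_nth)
  then obtain o0 p0 o1 p1 o2 p2 o3 where split: "os = o0 @ p0 @ o1 @ p1 @ o2 @ p2 @ o3"
    and lengths: "length o0 = length u0" "length p0 = length A0" "length o1 = length u1"
      "length p1 = length A1" "length o2 = length u2" "length p2 = length A2" "length o3 = length u3"
    by (auto simp: list_all2_append1 dest: list_all2_lengthD)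
  define e0 where "e0 = last (last (xi # o0) # p0)"
  define e1 where "e1 = last (last (e0 # o1) # p1)"
  define e2 where "e2 = last (last (e1 # o2) # p2)"
  note facts = os[unfolded split, THEN splice_in_colourings_iff[THEN iffD1,
        OF lengths(1-6) refl e0_def[symmetric] refl e1_def[symmetric] refl e2_def[symmetric] disjoint]]
  have "e0 \<in> X" "e1 \<in> X" "e2 \<in> X"
    using facts xi unfolding e0_def e1_def e2_def by (auto intro!: last_Cons_in)
  with facts lengths have "((o0, o1, o2, o3, e0, e1, e2), (p0, p1, p2)) \<in>
      (SIGMA g:outer_colourings xi xj u0 u1 u2 u3. inner_fillings xi A0 A1 A2 g)"
    by (simp add: outer_colourings_def fillings_def strand_colours_def e0_def[symmetric]
        e1_def[symmetric] e2_def[symmetric] del: last.simps)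
  then show "os \<in> splice ` (SIGMA g:outer_colourings xi xj u0 u1 u2 u3. inner_fillings xi A0 A1 A2 g)"
    unfolding split by force
qed

lemma finite_fillings: "finite (fillings A0 A1 A2 i0 i1 i2 e0 e1 e2)"
proof (rule finite_subset)
  show "fillings A0 A1 A2 i0 i1 i2 e0 e1 e2 \<subseteq> {p. set p \<subseteq> X \<and> length p = length A0} \<times>
      {p. set p \<subseteq> X \<and> length p = length A1} \<times> {p. set p \<subseteq> X \<and> length p = length A2}"
    unfolding fillings_def strand_colours_def by auto
qed (intro finite_cartesian_product finite_lists_length_eq finite_X)+

lemma finite_outer_colourings: "finite (outer_colourings xi xj u0 u1 u2 u3)"
proof (rule finite_subset)
  show "outer_colourings xi xj u0 u1 u2 u3 \<subseteq> {p. set p \<subseteq> X \<and> length p = length u0} \<times>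
      {p. set p \<subseteq> X \<and> length p = length u1} \<times> {p. set p \<subseteq> X \<and> length p = length u2} \<times>
      {p. set p \<subseteq> X \<and> length p = length u3} \<times> X \<times> X \<times> X"
    unfolding outer_colourings_def by auto
qed (intro finite_cartesian_product finite_lists_length_eq finite_X)+

lemma card_colourings_splice:
  assumes "xi \<in> X" and "labels (A0 @ A1 @ A2) \<inter> labels (u0 @ u1 @ u2 @ u3) = {}"
  shows "card (colourings xi xj (u0 @ A0 @ u1 @ A1 @ u2 @ A2 @ u3)) =
    (\<Sum>g\<in>outer_colourings xi xj u0 u1 u2 u3. card (inner_fillings xi A0 A1 A2 g))"
proof -
  have "card (colourings xi xj (u0 @ A0 @ u1 @ A1 @ u2 @ A2 @ u3)) =
      card (SIGMA g:outer_colourings xi xj u0 u1 u2 u3. inner_fillings xi A0 A1 A2 g)"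
    unfolding splice_image[OF assms, symmetric] by (rule card_image[OF inj_on_splice])
  also have "\<dots> = (\<Sum>g\<in>outer_colourings xi xj u0 u1 u2 u3. card (inner_fillings xi A0 A1 A2 g))"
    by (rule card_SigmaI) (auto simp: finite_outer_colourings finite_fillings)
  finally show ?thesis .
qed

definition interchangeable ::
  "letter list \<Rightarrow> letter list \<Rightarrow> letter list \<Rightarrow> letter list \<Rightarrow> letter list \<Rightarrow> letter list \<Rightarrow> bool" where
  "interchangeable A0 A1 A2 B0 B1 B2 \<longleftrightarrow>
     (\<forall>i0\<in>X. \<forall>i1\<in>X. \<forall>i2\<in>X. \<forall>e0\<in>X. \<forall>e1\<in>X. \<forall>e2\<in>X.
        card (fillings A0 A1 A2 i0 i1 i2 e0 e1 e2) = card (fillings B0 B1 B2 i0 i1 i2 e0 e1 e2))"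

lemma Phi_replace_pieces:
  assumes xi: "xi \<in> X"
    and disjoint_A: "labels (A0 @ A1 @ A2) \<inter> labels (u0 @ u1 @ u2 @ u3) = {}"
    and disjoint_B: "labels (B0 @ B1 @ B2) \<inter> labels (u0 @ u1 @ u2 @ u3) = {}"
    and "interchangeable A0 A1 A2 B0 B1 B2"
  shows "Phi X ul ol xi xj (u0 @ A0 @ u1 @ A1 @ u2 @ A2 @ u3) =
    Phi X ul ol xi xj (u0 @ B0 @ u1 @ B1 @ u2 @ B2 @ u3)"
proof -
  have "card (inner_fillings xi A0 A1 A2 g) = card (inner_fillings xi B0 B1 B2 g)"
    if "g \<in> outer_colourings xi xj u0 u1 u2 u3" for g
  proof -
    obtain o0 o1 o2 o3 e0 e1 e2 where g: "g = (o0, o1, o2, o3, e0, e1, e2)"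
      by (cases g) auto
    from that xi have "last (xi # o0) \<in> X" "last (e0 # o1) \<in> X" "last (e1 # o2) \<in> X"
      "e0 \<in> X" "e1 \<in> X" "e2 \<in> X"
      unfolding g outer_colourings_def by (auto intro!: last_Cons_in)
    with assms(4) show ?thesis
      unfolding g interchangeable_def by simp
  qed
  then show ?thesis
    using card_colourings_splice[OF xi disjoint_A] card_colourings_splice[OF xi disjoint_B]
    by (simp add: Phi_eq_card_colourings[OF xi])
qed

lemma card_fillings_swap01:
  "card (fillings A1 A0 A2 i1 i0 i2 e1 e0 e2) = card (fillings A0 A1 A2 i0 i1 i2 e0 e1 e2)"
proof -
  have "bij_betw (\<lambda>(p0, p1, p2). (p1, p0, p2))
      (fillings A0 A1 A2 i0 i1 i2 e0 e1 e2) (fillings A1 A0 A2 i1 i0 i2 e1 e0 e2)"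
    by (rule bij_betw_byWitness[where f' = "\<lambda>(p0, p1, p2). (p1, p0, p2)"])
      (auto simp: fillings_def Un_ac)
  then show ?thesis
    by (simp add: bij_betw_same_card)
qed

lemma card_fillings_swap12:
  "card (fillings A0 A2 A1 i0 i2 i1 e0 e2 e1) = card (fillings A0 A1 A2 i0 i1 i2 e0 e1 e2)"
proof -
  have "bij_betw (\<lambda>(p0, p1, p2). (p0, p2, p1))
      (fillings A0 A1 A2 i0 i1 i2 e0 e1 e2) (fillings A0 A2 A1 i0 i2 i1 e0 e2 e1)"
    by (rule bij_betw_byWitness[where f' = "\<lambda>(p0, p1, p2). (p0, p2, p1)"])
      (auto simp: fillings_def Un_ac)
  then show ?thesis
    by (simp add: bij_betw_same_card)
qed

lemma interchangeable_swap01: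
  "interchangeable A0 A1 A2 B0 B1 B2 \<Longrightarrow> interchangeable A1 A0 A2 B1 B0 B2"
  unfolding interchangeable_def card_fillings_swap01 by simp

lemma interchangeable_swap12:
  "interchangeable A0 A1 A2 B0 B1 B2 \<Longrightarrow> interchangeable A0 A2 A1 B0 B2 B1"
  unfolding interchangeable_def card_fillings_swap12 by simp

lemma interchangeable_permute:
  assumes "interchangeable (P ! 0) (P ! 1) (P ! 2) (Q ! 0) (Q ! 1) (Q ! 2)"
    and "distinct [i, j, k]" "i < 3" "j < 3" "k < 3"
  shows "interchangeable (P ! i) (P ! j) (P ! k) (Q ! i) (Q ! j) (Q ! k)"
proof -
  have "i \<in> {0, 1, 2}" "j \<in> {0, 1, 2}" "k \<in> {0, 1, 2}"
    using assms(3-5) by auto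
  with assms(2) have "(i, j, k) \<in> {(0, 1, 2), (1, 0, 2), (0, 2, 1), (1, 2, 0), (2, 0, 1), (2, 1, 0)}"
    by auto
  then show ?thesis
    using assms(1) interchangeable_swap01[OF assms(1)] interchangeable_swap12[OF assms(1)]
      interchangeable_swap12[OF interchangeable_swap01[OF assms(1)]]
      interchangeable_swap01[OF interchangeable_swap12[OF assms(1)]]
      interchangeable_swap01[OF interchangeable_swap12[OF interchangeable_swap01[OF assms(1)]]]
    by (elim insertE emptyE) simp_all
qed

lemma card_fillings_Nil:
  "card (fillings [] [] [] i0 i1 i2 e0 e1 e2) = (if i0 = e0 \<and> i1 = e1 \<and> i2 = e2 then 1 else 0)"
proof -
  have "fillings [] [] [] i0 i1 i2 e0 e1 e2 = (if i0 = e0 \<and> i1 = e1 \<and> i2 = e2 then {([], [], [])} else {})"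
    unfolding fillings_def by auto
  then show ?thesis
    by simp
qed

lemma set_decorate_relabel:
  "set (decorate (map (\<lambda>(l, ov, s). (f l, ov, s)) w) c os) =
    (\<lambda>((l, ov, s), a, b). ((f l, ov, s), a, b)) ` set (decorate w c os)"
  by (induction w c os rule: decorate.induct) auto

lemma crossings_ok_relabel:
  assumes "inj_on f ((fst \<circ> fst) ` S)"
  shows "crossings_ok ul ol ((\<lambda>((l, ov, s), a, b). ((f l, ov, s), a, b)) ` S) \<longleftrightarrow> crossings_ok ul ol S"
    (is "crossings_ok ul ol ?S' \<longleftrightarrow> _")
proof
  assume ok': "crossings_ok ul ol ?S'"
  show "crossings_ok ul ol S"
    unfolding crossings_ok_def
  proof (intro allI impI)
    fix l s a b c d
    assume "((l, True, s), a, b) \<in> S" "((l, False, s), c, d) \<in> S"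
    then have "((f l, True, s), a, b) \<in> ?S'" "((f l, False, s), c, d) \<in> ?S'"
      by force+
    with ok' show "crossing_ok ul ol s a b c d"
      unfolding crossings_ok_def by blast
  qed
next
  assume ok: "crossings_ok ul ol S"
  show "crossings_ok ul ol ?S'"
    unfolding crossings_ok_def
  proof (intro allI impI)
    fix l s a b c d
    assume "((l, True, s), a, b) \<in> ?S'" "((l, False, s), c, d) \<in> ?S'"
    then obtain l1 l2 where over: "((l1, True, s), a, b) \<in> S" and under: "((l2, False, s), c, d) \<in> S"
      and "f l1 = l" "f l2 = l"
      by auto
    then have "l1 = l2"
      using inj_onD[OF assms, of l1 l2] by force
    with over under ok show "crossing_ok ul ol s a b c d"
      unfolding crossings_ok_def by blast
  qed
qed

lemma Phi_relabel_move:
  assumes "xi \<in> X" and "relabel_move w w'"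
  shows "Phi X ul ol xi xj w = Phi X ul ol xi xj w'"
proof -
  from assms(2) obtain f where f: "inj_on f (labels w)" and w': "w' = map (\<lambda>(l, ov, s). (f l, ov, s)) w"
    unfolding relabel_move_def by blast
  have "(fst \<circ> fst) ` set (decorate w c os) \<subseteq> labels w" for c os
    using letters_decorate unfolding labels_def by force
  then have "crossings_ok ul ol (set (decorate w' c os)) \<longleftrightarrow> crossings_ok ul ol (set (decorate w c os))" for c os
    unfolding w' set_decorate_relabel by (intro crossings_ok_relabel inj_on_subset[OF f])
  then have "colourings xi xj w' = colourings xi xj w"
    unfolding colourings_def by (simp add: w')
  then show ?thesis
    by (simp add: Phi_eq_card_colourings[OF assms(1)])
qed

end

section \<open>The first and second Reidemeister moves\<close>

locale finite_biquandle = colour_counting + biquandle_on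
begin

lemma ol_diag_surj:
  assumes "c \<in> X"
  shows "\<exists>z\<in>X. ol z z = c"
proof -
  have "inj_on (\<lambda>z. ol z z) X"
  proof (rule inj_onI)
    fix z z'
    assume "z \<in> X" "z' \<in> X" "ol z z = ol z' z'"
    moreover from this have "ul z z = ul z' z'"
      using ul_ol_idem by simp
    ultimately show "z = z'"
      using switch_cancel[of z z z' z'] by simp
  qed
  then have "(\<lambda>z. ol z z) ` X = X"
    by (intro endo_inj_surj finite_X) auto
  with assms have "c \<in> (\<lambda>z. ol z z) ` X"
    by simp
  then show ?thesis
    by (auto simp: image_iff)
qed

lemma eq_if_ol_eq_ul:
  assumes "x \<in> X" "y \<in> X" "ol y x = ul x y"
  shows "x = y"
proof -
  obtain z where z: "z \<in> X" "ol z z = ol y x"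
    using ol_diag_surj assms by auto
  then have "ul z z = ul x y"
    using assms(3) ul_ol_idem by simp
  with z assms have "x = z \<and> y = z"
    by (intro switch_cancel) auto
  then show ?thesis
    by simp
qed

lemma kink_coloured_exists_iff:
  assumes "i \<in> X" "e \<in> X"
  shows "(\<exists>x\<in>X. kink_coloured ov s i x e) \<longleftrightarrow> i = e"
proof
  assume "\<exists>x\<in>X. kink_coloured ov s i x e"
  then obtain x where "x \<in> X" "kink_coloured ov s i x e"
    by blast
  then show "i = e"
    using assms eq_if_ol_eq_ul[of e i] eq_if_ol_eq_ul[of i e] ul_ol_idem[of x]
    unfolding kink_coloured_def crossing_ok_def by (cases ov; cases s) auto
next
  assume "i = e"
  moreover obtain z where "z \<in> X" "ol z z = e"
    using ol_diag_surj assms(2) by blast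
  ultimately have "kink_coloured ov s i (if ov = s then ul e e else z) e"
    using ul_ol_idem[of z] ul_ol_idem[of e] assms(2)
    unfolding kink_coloured_def crossing_ok_def by (cases ov; cases s) auto
  then show "\<exists>x\<in>X. kink_coloured ov s i x e"
    using \<open>z \<in> X\<close> assms(2) by (metis ul_closed)
qed

lemma card_fillings_kink:
  assumes "i0 \<in> X" "e0 \<in> X"
  shows "card (fillings [(l, ov, s), (l, \<not> ov, s)] [] [] i0 i1 i2 e0 e1 e2) =
    (if i0 = e0 \<and> i1 = e1 \<and> i2 = e2 then 1 else 0)"
proof -
  have "crossings_ok ul ol (set (decorate [(l, ov, s), (l, \<not> ov, s)] i0 [x, e0]) \<union>
      set (decorate [] i1 p1) \<union> set (decorate [] i2 p2)) \<longleftrightarrow> kink_coloured ov s i0 x e0" for x p1 p2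
    by (cases ov) (simp_all add: kink_coloured_def crossings_ok_insert_over crossings_ok_insert_under)
  then have fillings_eq: "fillings [(l, ov, s), (l, \<not> ov, s)] [] [] i0 i1 i2 e0 e1 e2 =
      {([x, e0], [], []) | x. x \<in> X \<and> kink_coloured ov s i0 x e0 \<and> i1 = e1 \<and> i2 = e2}"
    unfolding fillings_def by (auto simp: strand_colours_length_2[OF _ assms(2)])
  show ?thesis
  proof (rule card_subsingleton)
    show "p = q" if "p \<in> fillings [(l, ov, s), (l, \<not> ov, s)] [] [] i0 i1 i2 e0 e1 e2"
      "q \<in> fillings [(l, ov, s), (l, \<not> ov, s)] [] [] i0 i1 i2 e0 e1 e2" for p q
      using that kink_coloured_unique assms unfolding fillings_eq by blast
    show "fillings [(l, ov, s), (l, \<not> ov, s)] [] [] i0 i1 i2 e0 e1 e2 \<noteq> {} \<longleftrightarrow> i0 = e0 \<and> i1 = e1 \<and> i2 = e2"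
      using kink_coloured_exists_iff[OF assms] unfolding fillings_eq by auto
  qed
qed

lemma card_fillings_bigon:
  assumes "a \<noteq> b" and X: "i0 \<in> X" "i1 \<in> X" "e0 \<in> X" "e1 \<in> X"
    and UP: "UP = (if rv then [(b, False, \<not> s), (a, False, s)] else [(a, False, s), (b, False, \<not> s)])"
  shows "card (fillings [(a, True, s), (b, True, \<not> s)] UP [] i0 i1 i2 e0 e1 e2) =
    (if i0 = e0 \<and> i1 = e1 \<and> i2 = e2 then 1 else 0)"
proof -
  have "crossings_ok ul ol (set (decorate [(a, True, s), (b, True, \<not> s)] i0 [x, e0]) \<union>
      set (decorate UP i1 [y, e1]) \<union> set (decorate [] i2 p2)) \<longleftrightarrow> bigon_coloured rv s i0 x e0 i1 y e1"
    for x y p2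
    using assms(1) unfolding UP bigon_coloured_def
    by (cases rv) (auto simp: crossings_ok_insert_over crossings_ok_insert_under crossing_ok_reverse)
  moreover have "length UP = 2"
    using UP by simp
  ultimately have fillings_eq: "fillings [(a, True, s), (b, True, \<not> s)] UP [] i0 i1 i2 e0 e1 e2 =
      {([x, e0], [y, e1], []) | x y. x \<in> X \<and> y \<in> X \<and> bigon_coloured rv s i0 x e0 i1 y e1 \<and> i2 = e2}"
    unfolding fillings_def
    by (auto simp: strand_colours_length_2[OF _ X(3)] strand_colours_length_2[OF _ X(4)])
  show ?thesis
  proof (rule card_subsingleton)
    show "p = q" if "p \<in> fillings [(a, True, s), (b, True, \<not> s)] UP [] i0 i1 i2 e0 e1 e2"
      "q \<in> fillings [(a, True, s), (b, True, \<not> s)] UP [] i0 i1 i2 e0 e1 e2" for p q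
      using that bigon_coloured_unique X unfolding fillings_eq by blast
    show "fillings [(a, True, s), (b, True, \<not> s)] UP [] i0 i1 i2 e0 e1 e2 \<noteq> {} \<longleftrightarrow>
        i0 = e0 \<and> i1 = e1 \<and> i2 = e2"
      using bigon_coloured_exists_iff[OF X, of rv s] unfolding fillings_eq by blast
  qed
qed

lemma Phi_r1_move:
  assumes "xi \<in> X" and "r1_move w w'"
  shows "Phi X ul ol xi xj w = Phi X ul ol xi xj w'"
proof -
  from assms(2) obtain u v l ov s where w: "w = u @ [(l, ov, s), (l, \<not> ov, s)] @ v"
    and w': "w' = u @ v" and l: "l \<notin> labels (u @ v)"
    unfolding r1_move_def by blast
  have "labels ([(l, ov, s), (l, \<not> ov, s)] @ [] @ []) \<inter> labels (u @ v @ [] @ []) = {}"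
    using l by (simp add: labels_def)
  moreover have "interchangeable [(l, ov, s), (l, \<not> ov, s)] [] [] [] [] []"
    unfolding interchangeable_def by (simp add: card_fillings_kink card_fillings_Nil)
  ultimately have "Phi X ul ol xi xj (u @ [(l, ov, s), (l, \<not> ov, s)] @ v @ [] @ [] @ [] @ []) =
      Phi X ul ol xi xj (u @ [] @ v @ [] @ [] @ [] @ [])"
    by (intro Phi_replace_pieces[OF assms(1)]) (simp_all add: labels_def)
  then show ?thesis
    unfolding w w' by simp
qed

lemma Phi_r2_move:
  assumes "xi \<in> X" and "r2_move w w'"
  shows "Phi X ul ol xi xj w = Phi X ul ol xi xj w'"
proof -
  from assms(2) obtain u1 u2 u3 a b s rv ovfirst OP UP where
    ab: "a \<noteq> b" "a \<notin> labels (u1 @ u2 @ u3)" "b \<notin> labels (u1 @ u2 @ u3)"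
    and OP: "OP = [(a, True, s), (b, True, \<not> s)]"
    and UP: "UP = (if rv then [(b, False, \<not> s), (a, False, s)] else [(a, False, s), (b, False, \<not> s)])"
    and w: "w = u1 @ (if ovfirst then OP else UP) @ u2 @ (if ovfirst then UP else OP) @ u3"
    and w': "w' = u1 @ u2 @ u3"
    unfolding r2_move_def Let_def by blast
  have "labels ((if ovfirst then OP else UP) @ (if ovfirst then UP else OP) @ []) \<inter>
      labels (u1 @ u2 @ u3 @ []) = {}"
    using ab unfolding OP UP labels_def by auto
  moreover have "interchangeable OP UP [] [] [] []"
    unfolding interchangeable_def OP using card_fillings_bigon[OF ab(1) _ _ _ _ UP]
    by (simp add: card_fillings_Nil)
  then have "interchangeable (if ovfirst then OP else UP) (if ovfirst then UP else OP) [] [] [] []"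
    using interchangeable_swap01 by (cases ovfirst) auto
  ultimately have "Phi X ul ol xi xj
        (u1 @ (if ovfirst then OP else UP) @ u2 @ (if ovfirst then UP else OP) @ u3 @ [] @ []) =
      Phi X ul ol xi xj (u1 @ [] @ u2 @ [] @ u3 @ [] @ [])"
    by (intro Phi_replace_pieces[OF assms(1)]) (simp_all add: labels_def)
  then show ?thesis
    unfolding w w' by simp
qed

end

section \<open>The third Reidemeister move\<close>

context biquandle_on
begin

text \<open>The top, middle and bottom strand carry the colours \<open>t0 t1 t2\<close>, \<open>m0 m1 m2\<close>, \<open>b0 b1 b2\<close>
  before, between and after their two crossings, which they pass in the orders recorded by
  \<open>oT\<close>, \<open>oM\<close>, \<open>oB\<close> as in \<open>r3_pieces\<close>.\<close>

definition r3_coloured ::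
  "bool \<Rightarrow> bool \<Rightarrow> bool \<Rightarrow> bool \<Rightarrow> bool \<Rightarrow> bool \<Rightarrow>
    'a \<Rightarrow> 'a \<Rightarrow> 'a \<Rightarrow> 'a \<Rightarrow> 'a \<Rightarrow> 'a \<Rightarrow> 'a \<Rightarrow> 'a \<Rightarrow> 'a \<Rightarrow> bool" where
  "r3_coloured sa sb sc oT oM oB t0 t1 t2 m0 m1 m2 b0 b1 b2 \<longleftrightarrow>
    crossing_ok ul ol sa (if oT then t0 else t1) (if oT then t1 else t2)
      (if oM then m0 else m1) (if oM then m1 else m2) \<and>
    crossing_ok ul ol sb (if oT then t1 else t0) (if oT then t2 else t1)
      (if oB then b0 else b1) (if oB then b1 else b2) \<and>
    crossing_ok ul ol sc (if oM then m1 else m0) (if oM then m2 else m1)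
      (if oB then b1 else b0) (if oB then b2 else b1)"

definition r3_graph :: "bool \<Rightarrow> bool \<Rightarrow> bool \<Rightarrow> bool \<Rightarrow> bool \<Rightarrow> bool \<Rightarrow>
    (('a \<times> 'a \<times> 'a \<times> 'a \<times> 'a \<times> 'a) \<times> ('a \<times> 'a \<times> 'a)) set" where
  "r3_graph sa sb sc oT oM oB = {((t0, t2, m0, m2, b0, b2), (t1, m1, b1)).
     t0 \<in> X \<and> t1 \<in> X \<and> t2 \<in> X \<and> m0 \<in> X \<and> m1 \<in> X \<and> m2 \<in> X \<and> b0 \<in> X \<and> b1 \<in> X \<and> b2 \<in> X \<and>
     r3_coloured sa sb sc oT oM oB t0 t1 t2 m0 m1 m2 b0 b1 b2}"

lemma Domain_r3_graph_subsetI: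
  assumes "\<And>t0 t1 t2 m0 m1 m2 b0 b1 b2. ((t0, t2, m0, m2, b0, b2), (t1, m1, b1)) \<in> r3_graph sa sb sc oT oM oB \<Longrightarrow>
    ((t0, t2, m0, m2, b0, b2), w t0 t2 m0 m2 b0 b2) \<in> r3_graph sa sb sc oT' oM' oB'"
  shows "Domain (r3_graph sa sb sc oT oM oB) \<subseteq> Domain (r3_graph sa sb sc oT' oM' oB')"
proof (rule subsetI, elim DomainE)
  fix bd m
  assume "(bd, m) \<in> r3_graph sa sb sc oT oM oB"
  then show "bd \<in> Domain (r3_graph sa sb sc oT' oM' oB')"
    using assms by (cases bd; cases m) (blast intro: DomainI)
qed

lemma r3_coloured_inner_unique:
  assumes "r3_coloured sa sb sc oT oM oB t0 t1 t2 m0 m1 m2 b0 b1 b2"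
    and "r3_coloured sa sb sc oT oM oB t0 t1' t2 m0 m1' m2 b0 b1' b2"
    and "t0 \<in> X" "t1 \<in> X" "t2 \<in> X" "m0 \<in> X" "m1 \<in> X" "m2 \<in> X" "b0 \<in> X" "b1 \<in> X" "b2 \<in> X"
      "t1' \<in> X" "m1' \<in> X" "b1' \<in> X"
  shows "t1 = t1' \<and> m1 = m1' \<and> b1 = b1'"
proof -
  note c = assms(1,2)[unfolded r3_coloured_def]
  have "t1 = t1' \<and> m1 = m1'"
    using crossing_ok_determined[OF conjunct1[OF c(1)] conjunct1[OF c(2)]] assms(3-)
    by (cases oT; cases oM) auto
  moreover have "b1 = b1'"
    using crossing_ok_determined[OF conjunct1[OF conjunct2[OF c(1)]] conjunct1[OF conjunct2[OF c(2)]]]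
      assms(3-) by (cases oT; cases oB) auto
  ultimately show ?thesis
    by simp
qed

lemma r3_coloured_boundary_unique:
  assumes "r3_coloured sa sb sc oT oM oB t0 t1 t2 m0 m1 m2 b0 b1 b2"
    and "r3_coloured sa sb sc oT oM oB t0' t1 t2' m0' m1 m2' b0' b1 b2'"
    and "t0 \<in> X" "t1 \<in> X" "t2 \<in> X" "m0 \<in> X" "m1 \<in> X" "m2 \<in> X" "b0 \<in> X" "b1 \<in> X" "b2 \<in> X"
      "t0' \<in> X" "t2' \<in> X" "m0' \<in> X" "m2' \<in> X" "b0' \<in> X" "b2' \<in> X"
  shows "t0 = t0' \<and> t2 = t2' \<and> m0 = m0' \<and> m2 = m2' \<and> b0 = b0' \<and> b2 = b2'"
proof -
  note c = assms(1,2)[unfolded r3_coloured_def]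
  have "(if oT then t0 else t2) = (if oT then t0' else t2') \<and> (if oM then m0 else m2) = (if oM then m0' else m2')"
    using crossing_ok_determined[OF conjunct1[OF c(1)] conjunct1[OF c(2)]] assms(3-)
    by (cases oT; cases oM) auto
  moreover have "(if oT then t2 else t0) = (if oT then t2' else t0') \<and> (if oB then b0 else b2) = (if oB then b0' else b2')"
    using crossing_ok_determined[OF conjunct1[OF conjunct2[OF c(1)]] conjunct1[OF conjunct2[OF c(2)]]]
      assms(3-) by (cases oT; cases oB) auto
  moreover have "(if oM then m2 else m0) = (if oM then m2' else m0') \<and> (if oB then b2 else b0) = (if oB then b2' else b0')"
    using crossing_ok_determined[OF conjunct2[OF conjunct2[OF c(1)]] conjunct2[OF conjunct2[OF c(2)]]]
      assms(3-) by (cases oM; cases oB) auto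
  ultimately show ?thesis
    by (cases oT; cases oM; cases oB) auto
qed

lemma r3_coloured_exists_boundary:
  assumes "t1 \<in> X" "m1 \<in> X" "b1 \<in> X"
  shows "\<exists>t0 t2 m0 m2 b0 b2. t0 \<in> X \<and> t2 \<in> X \<and> m0 \<in> X \<and> m2 \<in> X \<and> b0 \<in> X \<and> b2 \<in> X \<and>
    r3_coloured sa sb sc oT oM oB t0 t1 t2 m0 m1 m2 b0 b1 b2"
proof -
  obtain ta ma where "ta \<in> X" "ma \<in> X" "crossing_ok ul ol sa (if oT then ta else t1) (if oT then t1 else ta)
      (if oM then ma else m1) (if oM then m1 else ma)"
    using crossing_ok_extend[OF assms(1,2), of sa oT oM] by blast
  moreover obtain tb bb where "tb \<in> X" "bb \<in> X" "crossing_ok ul ol sb (if \<not> oT then tb else t1)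
      (if \<not> oT then t1 else tb) (if oB then bb else b1) (if oB then b1 else bb)"
    using crossing_ok_extend[OF assms(1,3), of sb "\<not> oT" oB] by blast
  moreover obtain mc bc where "mc \<in> X" "bc \<in> X" "crossing_ok ul ol sc (if \<not> oM then mc else m1)
      (if \<not> oM then m1 else mc) (if \<not> oB then bc else b1) (if \<not> oB then b1 else bc)"
    using crossing_ok_extend[OF assms(2,3), of sc "\<not> oM" "\<not> oB"] by blast
  ultimately have "r3_coloured sa sb sc oT oM oB (if oT then ta else tb) t1 (if oT then tb else ta)
      (if oM then ma else mc) m1 (if oM then mc else ma) (if oB then bb else bc) b1 (if oB then bc else bb)"
    and "(if oT then ta else tb) \<in> X" "(if oT then tb else ta) \<in> X" "(if oM then ma else mc) \<in> X"
      "(if oM then mc else ma) \<in> X" "(if oB then bb else bc) \<in> X" "(if oB then bc else bb) \<in> X"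
    unfolding r3_coloured_def by (cases oT; cases oM; cases oB; simp)+
  then show ?thesis
    by blast
qed

lemma r3_pieces_crossings_ok_iff:
  assumes "distinct [a, b, c]"
  shows "crossings_ok ul ol (set (decorate (r3_pieces a b c sa sb sc oT oM oB ! 0) t0 [t1, t2]) \<union>
      set (decorate (r3_pieces a b c sa sb sc oT oM oB ! 1) m0 [m1, m2]) \<union>
      set (decorate (r3_pieces a b c sa sb sc oT oM oB ! 2) b0 [b1, b2]))
    \<longleftrightarrow> r3_coloured sa sb sc oT oM oB t0 t1 t2 m0 m1 m2 b0 b1 b2"
  using assms unfolding r3_pieces_def r3_coloured_def
  by (cases oT; cases oM; cases oB) (auto simp: crossings_ok_insert_over crossings_ok_insert_under)

end

lemma labels_r3_pieces: "n < 3 \<Longrightarrow> labels (r3_pieces a b c sa sb sc oT oM oB ! n) \<subseteq> {a, b, c}"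
  unfolding r3_pieces_def labels_def by (auto simp: less_Suc_eq numeral_3_eq_3)

context finite_biquandle
begin

lemma finite_r3_graph: "finite (r3_graph sa sb sc oT oM oB)"
proof (rule finite_subset)
  show "r3_graph sa sb sc oT oM oB \<subseteq> (X \<times> X \<times> X \<times> X \<times> X \<times> X) \<times> (X \<times> X \<times> X)"
    unfolding r3_graph_def by auto
qed (intro finite_cartesian_product finite_X)+

lemma single_valued_r3_graph: "single_valued (r3_graph sa sb sc oT oM oB)"
  unfolding single_valued_def r3_graph_def using r3_coloured_inner_unique by auto

lemma card_r3_graph: "card (r3_graph sa sb sc oT oM oB) = card (X \<times> X \<times> X)"
proof -
  have "inj_on snd (r3_graph sa sb sc oT oM oB)"
    unfolding r3_graph_def inj_on_def using r3_coloured_boundary_unique by auto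
  moreover have "snd ` r3_graph sa sb sc oT oM oB = X \<times> X \<times> X"
  proof
    show "X \<times> X \<times> X \<subseteq> snd ` r3_graph sa sb sc oT oM oB"
    proof clarify
      fix t1 m1 b1
      assume inner: "t1 \<in> X" "m1 \<in> X" "b1 \<in> X"
      then obtain t0 t2 m0 m2 b0 b2 where "t0 \<in> X" "t2 \<in> X" "m0 \<in> X" "m2 \<in> X" "b0 \<in> X" "b2 \<in> X"
        "r3_coloured sa sb sc oT oM oB t0 t1 t2 m0 m1 m2 b0 b1 b2"
        using r3_coloured_exists_boundary[OF inner, of sa sb sc oT oM oB] by (elim exE conjE)
      with inner have "((t0, t2, m0, m2, b0, b2), (t1, m1, b1)) \<in> r3_graph sa sb sc oT oM oB"
        unfolding r3_graph_def by simp
      then show "(t1, m1, b1) \<in> snd ` r3_graph sa sb sc oT oM oB"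
        by (rule rev_image_eqI) simp
    qed
  qed (auto simp: r3_graph_def)
  ultimately show ?thesis
    by (metis card_image)
qed

text \<open>The witnesses \<open>w\<close> are the inner colours after the move; the exchange laws show that they fit.\<close>

lemma r3_canonical_orientation:
  obtains oT oM oB where "(oM = oT) = (sb = sc)" "(oB = oT) = (sa = sc)"
    "Domain (r3_graph sa sb sc oT oM oB) \<subseteq> Domain (r3_graph sa sb sc (\<not> oT) (\<not> oM) (\<not> oB))"
proof (cases sa; cases sb; cases sc)
  assume "\<not> sa" "\<not> sb" "\<not> sc"
  then show thesis
    by (intro that[where oT = False and oM = False and oB = False]
        Domain_r3_graph_subsetI[where w = "\<lambda>t0 t2 m0 m2 b0 b2. (ol t2 b0, ol m2 (ul b0 t2), ul b0 t2)"])
      (auto simp: r3_graph_def r3_coloured_def crossing_ok_def exchange_laws)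
next
  assume "\<not> sa" "\<not> sb" "sc"
  then show thesis
    by (intro that[where oT = True and oM = False and oB = False]
        Domain_r3_graph_subsetI[where w = "\<lambda>t0 t2 m0 m2 b0 b2. (ol t2 m0, ul m0 t2, ul b0 (ol t2 m0))"])
      (auto simp: r3_graph_def r3_coloured_def crossing_ok_def exchange_laws)
next
  assume "\<not> sa" "sb" "\<not> sc"
  then show thesis
    by (intro that[where oT = True and oM = False and oB = True]
        Domain_r3_graph_subsetI[where w = "\<lambda>t0 t2 m0 m2 b0 b2. (ol t2 m0, ul m0 t2, ul b2 t0)"])
      (auto simp: r3_graph_def r3_coloured_def crossing_ok_def exchange_laws)
next
  assume "\<not> sa" "sb" "sc"
  then show thesis
    by (intro that[where oT = True and oM = True and oB = False]
        Domain_r3_graph_subsetI[where w = "\<lambda>t0 t2 m0 m2 b0 b2. (ol t2 (ol m0 b2), ol m0 b2, ul b2 m0)"])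
      (auto simp: r3_graph_def r3_coloured_def crossing_ok_def exchange_laws)
next
  assume "sa" "\<not> sb" "\<not> sc"
  then show thesis
    by (intro that[where oT = False and oM = False and oB = True]
        Domain_r3_graph_subsetI[where w = "\<lambda>t0 t2 m0 m2 b0 b2. (ol t0 (ol m2 b0), ol m2 b0, ul b0 m2)"])
      (auto simp: r3_graph_def r3_coloured_def crossing_ok_def exchange_laws)
next
  assume "sa" "\<not> sb" "sc"
  then show thesis
    by (intro that[where oT = False and oM = True and oB = False]
        Domain_r3_graph_subsetI[where w = "\<lambda>t0 t2 m0 m2 b0 b2. (ol t0 m2, ul m2 t0, ul b0 t2)"])
      (auto simp: r3_graph_def r3_coloured_def crossing_ok_def exchange_laws)
next
  assume "sa" "sb" "\<not> sc"
  then show thesis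
    by (intro that[where oT = False and oM = True and oB = True]
        Domain_r3_graph_subsetI[where w = "\<lambda>t0 t2 m0 m2 b0 b2. (ol t0 m2, ul m2 t0, ul b2 (ol t0 m2))"])
      (auto simp: r3_graph_def r3_coloured_def crossing_ok_def exchange_laws)
next
  assume "sa" "sb" "sc"
  then show thesis
    by (intro that[where oT = True and oM = True and oB = True]
        Domain_r3_graph_subsetI[where w = "\<lambda>t0 t2 m0 m2 b0 b2. (ol t0 b2, ol m0 (ul b2 t0), ul b2 t0)"])
      (auto simp: r3_graph_def r3_coloured_def crossing_ok_def exchange_laws)
qed

lemma card_r3_graph_Image_reverse:
  assumes "(oM = oT) = (sb = sc)" "(oB = oT) = (sa = sc)"
  shows "card (r3_graph sa sb sc oT oM oB `` {bd}) =
    card (r3_graph sa sb sc (\<not> oT) (\<not> oM) (\<not> oB) `` {bd})"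
proof -
  \<comment> \<open>both graphs are single valued with \<open>card (X \<times> X \<times> X)\<close> elements\<close>
  have transfer: "card (r3_graph sa sb sc oT oM oB `` {bd}) =
      card (r3_graph sa sb sc (\<not> oT) (\<not> oM) (\<not> oB) `` {bd})"
    if "Domain (r3_graph sa sb sc oT oM oB) \<subseteq> Domain (r3_graph sa sb sc (\<not> oT) (\<not> oM) (\<not> oB))"
    for oT oM oB
    using that by (intro card_Image_eq_if_single_valued)
      (simp_all add: finite_r3_graph card_r3_graph single_valued_r3_graph)
  obtain oT' oM' oB' where canonical: "(oM' = oT') = (sb = sc)" "(oB' = oT') = (sa = sc)"
    "Domain (r3_graph sa sb sc oT' oM' oB') \<subseteq> Domain (r3_graph sa sb sc (\<not> oT') (\<not> oM') (\<not> oB'))"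
    by (rule r3_canonical_orientation)
  from canonical(1,2) assms have "(oT', oM', oB') = (oT, oM, oB) \<or> (oT', oM', oB') = (\<not> oT, \<not> oM, \<not> oB)"
    by auto
  then show ?thesis
    using transfer[OF canonical(3)] by auto
qed

lemma card_fillings_r3_pieces:
  assumes "distinct [a, b, c]"
    and "t0 \<in> X" "m0 \<in> X" "b0 \<in> X" "t2 \<in> X" "m2 \<in> X" "b2 \<in> X"
  shows "card (fillings (r3_pieces a b c sa sb sc oT oM oB ! 0) (r3_pieces a b c sa sb sc oT oM oB ! 1)
      (r3_pieces a b c sa sb sc oT oM oB ! 2) t0 m0 b0 t2 m2 b2) =
    card (r3_graph sa sb sc oT oM oB `` {(t0, t2, m0, m2, b0, b2)})"
proof -
  let ?P = "r3_pieces a b c sa sb sc oT oM oB"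
  have "length (?P ! 0) = 2" "length (?P ! 1) = 2" "length (?P ! 2) = 2"
    unfolding r3_pieces_def by simp_all
  then have "fillings (?P ! 0) (?P ! 1) (?P ! 2) t0 m0 b0 t2 m2 b2 =
      (\<lambda>(t1, m1, b1). ([t1, t2], [m1, m2], [b1, b2])) ` (r3_graph sa sb sc oT oM oB `` {(t0, t2, m0, m2, b0, b2)})"
    using assms(2-) r3_pieces_crossings_ok_iff[OF assms(1)] unfolding fillings_def r3_graph_def
    by (auto simp: strand_colours_length_2 image_iff)
  moreover have "inj_on (\<lambda>(t1, m1, b1). ([t1, t2], [m1, m2], [b1, b2])) A" for A :: "('a \<times> 'a \<times> 'a) set"
    by (auto simp: inj_on_def)
  ultimately show ?thesis
    by (simp add: card_image)
qed

lemma interchangeable_r3_pieces: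
  assumes "distinct [a, b, c]" "(oM = oT) = (sb = sc)" "(oB = oT) = (sa = sc)"
  shows "interchangeable
    (r3_pieces a b c sa sb sc oT oM oB ! 0) (r3_pieces a b c sa sb sc oT oM oB ! 1)
    (r3_pieces a b c sa sb sc oT oM oB ! 2) (r3_pieces a b c sa sb sc (\<not> oT) (\<not> oM) (\<not> oB) ! 0)
    (r3_pieces a b c sa sb sc (\<not> oT) (\<not> oM) (\<not> oB) ! 1) (r3_pieces a b c sa sb sc (\<not> oT) (\<not> oM) (\<not> oB) ! 2)"
  unfolding interchangeable_def
proof (intro ballI)
  fix t0 m0 b0 t2 m2 b2
  assume "t0 \<in> X" "m0 \<in> X" "b0 \<in> X" "t2 \<in> X" "m2 \<in> X" "b2 \<in> X"
  note boundary = assms(1) this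
  show "card (fillings (r3_pieces a b c sa sb sc oT oM oB ! 0) (r3_pieces a b c sa sb sc oT oM oB ! 1)
      (r3_pieces a b c sa sb sc oT oM oB ! 2) t0 m0 b0 t2 m2 b2) =
    card (fillings (r3_pieces a b c sa sb sc (\<not> oT) (\<not> oM) (\<not> oB) ! 0)
      (r3_pieces a b c sa sb sc (\<not> oT) (\<not> oM) (\<not> oB) ! 1)
      (r3_pieces a b c sa sb sc (\<not> oT) (\<not> oM) (\<not> oB) ! 2) t0 m0 b0 t2 m2 b2)"
    unfolding card_fillings_r3_pieces[OF boundary]
    by (rule card_r3_graph_Image_reverse[OF assms(2,3)])
qed

lemma Phi_r3_move:
  assumes "xi \<in> X" and "r3_move w w'"
  shows "Phi X ul ol xi xj w = Phi X ul ol xi xj w'"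
proof -
  from assms(2) obtain u0 u1 u2 u3 a b c sa sb sc oT oM oB i j k where
    abc: "distinct [a, b, c]" "{a, b, c} \<inter> labels (u0 @ u1 @ u2 @ u3) = {}"
    and orientation: "(oM = oT) = (sb = sc)" "(oB = oT) = (sa = sc)"
    and ijk: "distinct [i, j, k]" "i < 3" "j < 3" "k < 3"
    and w: "w = u0 @ r3_pieces a b c sa sb sc oT oM oB ! i @ u1 @ r3_pieces a b c sa sb sc oT oM oB ! j @
      u2 @ r3_pieces a b c sa sb sc oT oM oB ! k @ u3"
    and w': "w' = u0 @ r3_pieces a b c sa sb sc (\<not> oT) (\<not> oM) (\<not> oB) ! i @
      u1 @ r3_pieces a b c sa sb sc (\<not> oT) (\<not> oM) (\<not> oB) ! j @
      u2 @ r3_pieces a b c sa sb sc (\<not> oT) (\<not> oM) (\<not> oB) ! k @ u3"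
    unfolding r3_move_def Let_def by (elim exE conjE) (rule that; assumption)
  define P where "P = r3_pieces a b c sa sb sc oT oM oB"
  define Q where "Q = r3_pieces a b c sa sb sc (\<not> oT) (\<not> oM) (\<not> oB)"
  have "labels (P ! i @ P ! j @ P ! k) \<subseteq> {a, b, c}" "labels (Q ! i @ Q ! j @ Q ! k) \<subseteq> {a, b, c}"
    using labels_r3_pieces[OF ijk(2)] labels_r3_pieces[OF ijk(3)] labels_r3_pieces[OF ijk(4)]
    unfolding P_def Q_def by (simp_all add: labels_def image_Un)
  with abc(2) have "labels (P ! i @ P ! j @ P ! k) \<inter> labels (u0 @ u1 @ u2 @ u3) = {}"
    "labels (Q ! i @ Q ! j @ Q ! k) \<inter> labels (u0 @ u1 @ u2 @ u3) = {}"
    by blast+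
  moreover have "interchangeable (P ! i) (P ! j) (P ! k) (Q ! i) (Q ! j) (Q ! k)"
    unfolding P_def Q_def using interchangeable_r3_pieces[OF abc(1) orientation] ijk
    by (rule interchangeable_permute)
  ultimately show ?thesis
    unfolding w w' P_def Q_def by (rule Phi_replace_pieces[OF assms(1)])
qed

end

lemma (in finite_biquandle) Phi_knotoid_step:
  assumes "xi \<in> X" and "knotoid_step w w'"
  shows "Phi X ul ol xi xj w = Phi X ul ol xi xj w'"
  using assms(2) Phi_r1_move[OF assms(1)] Phi_r2_move[OF assms(1)] Phi_r3_move[OF assms(1)]
    Phi_relabel_move[OF assms(1)]
  unfolding knotoid_step_def by metis

theorem mainTheorem2:
  fixes X :: "'a set" and ul ol :: "'a \<Rightarrow> 'a \<Rightarrow> 'a"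
    and K K' :: "letter list" and xi xj :: 'a
  assumes "finite X" and "biquandle X ul ol"
    and "gauss_diagram K" and "gauss_diagram K'"
    and "knotoid_equiv K K'"
    and "xi \<in> X" and "xj \<in> X"
  shows "Phi X ul ol xi xj K = Phi X ul ol xi xj K'"
proof -
  interpret finite_biquandle X ul ol
    using assms(1,2) by unfold_locales
  from assms(5) show ?thesis
    unfolding knotoid_equiv_def
    by (induction rule: rtranclp_induct) (simp_all add: Phi_knotoid_step[OF assms(6)])
qed

end
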